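(* Let $n\le d$, let $V=\operatorname{span}\{|ii\rangle: i\in[n]\}\subseteq\mathbb{C}^d\otimes\mathbb{C}^d$, let $\phi=\sum_{i=1}^n\phi_i|ii\rangle\in V$, and let $K=\sum_{i=1}^n|e_i\rangle\langle ii|$, where $\{e_i\}$ is the standard basis of $\mathbb{C}^n$. If $\rho\in\mathcal{F}_{\phi}$ is separable, then $Z^\Gamma_K(\rho)=K\rho^\Gamma K^*\in\operatorname{R}_1[\mathcal{M}_n^+[x]]$, where $x=(|\phi_1|^2,\dots,|\phi_n|^2)$.
   Context: $|ij\rangle=|i\rangle\otimes|j\rangle$ in the standard basis; $\rho^\Gamma$ is the partial transpose on the second factor. A bipartite PSD $\rho$ is separable if it is a finite sum $\sum_k|v_k\rangle\langle v_k|\otimes|w_k\rangle\langle w_k|$. With $P_V$ the orthogonal projection onto $V$, $\mathcal{F}_\phi=\{\rho\in(\mathcal{M}_d\otimes\mathcal{M}_d)^+ : P_V\rho P_V=\lambda|\phi\rangle\langle\phi| \text{ for some } \lambda\ge0\}$. For $x\in\mathbb{R}^n_+$, $\mathcal{M}_n^+[x]$ is the cone of $n\times n$ complex PSD matrices $X$ for which there exists $\lambda$ with $X_{ii}=\lambda x_i$ for all $i$. For a cone $\mathcal{C}\subseteq\mathcal{M}_n^+$, $\operatorname{R}_1[\mathcal{C}]$ is the convex cone generated by its rank-1 elements. *)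

theory Defs
  imports "HOL-Analysis.Analysis"
begin

text \<open>Conventions: indices are 0-based. An n x n complex matrix is a function
  nat => nat => complex, only entries with indices < n matter. A matrix on
  C^d (x) C^d is a function indexed by pairs (i,j) with i,j < d, where (i,j)
  stands for the basis vector |ij> = |i> (x) |j>.\<close>

definition bi_idx :: "nat \<Rightarrow> (nat \<times> nat) set" where
  "bi_idx d = {0..<d} \<times> {0..<d}"

definition psd_on :: "'i set \<Rightarrow> ('i \<Rightarrow> 'i \<Rightarrow> complex) \<Rightarrow> bool" where
  "psd_on I A \<longleftrightarrow>
     (\<forall>a\<in>I. \<forall>b\<in>I. A b a = cnj (A a b)) \<and>
     (\<forall>v :: 'i \<Rightarrow> complex. 0 \<le> Re (\<Sum>a\<in>I. \<Sum>b\<in>I. cnj (v a) * A a b * v b))"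

definition mmult_on :: "'i set \<Rightarrow> ('i \<Rightarrow> 'i \<Rightarrow> complex) \<Rightarrow> ('i \<Rightarrow> 'i \<Rightarrow> complex)
    \<Rightarrow> ('i \<Rightarrow> 'i \<Rightarrow> complex)" where
  "mmult_on I A B = (\<lambda>a c. \<Sum>b\<in>I. A a b * B b c)"

definition separable :: "nat \<Rightarrow> (nat \<times> nat \<Rightarrow> nat \<times> nat \<Rightarrow> complex) \<Rightarrow> bool" where
  "separable d \<rho> \<longleftrightarrow> psd_on (bi_idx d) \<rho> \<and>
     (\<exists>(m::nat) (v :: nat \<Rightarrow> nat \<Rightarrow> complex) (w :: nat \<Rightarrow> nat \<Rightarrow> complex).
        \<forall>i<d. \<forall>j<d. \<forall>k<d. \<forall>l<d.
          \<rho> (i,j) (k,l) = (\<Sum>t<m. v t i * cnj (v t k) * w t j * cnj (w t l)))"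

text \<open>Orthogonal projection onto V = span{|ii> : i < n} (an orthonormal set).\<close>
definition projV :: "nat \<Rightarrow> (nat \<times> nat \<Rightarrow> nat \<times> nat \<Rightarrow> complex)" where
  "projV n = (\<lambda>(i,j) (k,l). if i = j \<and> k = l \<and> i = k \<and> i < n then 1 else 0)"

definition phi_vec :: "nat \<Rightarrow> (nat \<Rightarrow> complex) \<Rightarrow> (nat \<times> nat \<Rightarrow> complex)" where
  "phi_vec n \<phi> = (\<lambda>(i,j). if i = j \<and> i < n then \<phi> i else 0)"

definition F_phi :: "nat \<Rightarrow> nat \<Rightarrow> (nat \<Rightarrow> complex) \<Rightarrow> (nat \<times> nat \<Rightarrow> nat \<times> nat \<Rightarrow> complex) set" where
  "F_phi d n \<phi> = {\<rho>. psd_on (bi_idx d) \<rho> \<and>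
     (\<exists>lam::real. lam \<ge> 0 \<and> (\<forall>a\<in>bi_idx d. \<forall>b\<in>bi_idx d.
        mmult_on (bi_idx d) (mmult_on (bi_idx d) (projV n) \<rho>) (projV n) a b
          = of_real lam * phi_vec n \<phi> a * cnj (phi_vec n \<phi> b)))}"

definition ptrans :: "(nat \<times> nat \<Rightarrow> nat \<times> nat \<Rightarrow> complex) \<Rightarrow> (nat \<times> nat \<Rightarrow> nat \<times> nat \<Rightarrow> complex)" where
  "ptrans \<rho> = (\<lambda>(i,j) (k,l). \<rho> (i,l) (k,j))"

definition Kmat :: "nat \<Rightarrow> nat \<Rightarrow> nat \<times> nat \<Rightarrow> complex" where
  "Kmat n = (\<lambda>e (i,j). if i = j \<and> i = e \<and> e < n then 1 else 0)"

definition ZK :: "nat \<Rightarrow> nat \<Rightarrow> (nat \<times> nat \<Rightarrow> nat \<times> nat \<Rightarrow> complex) \<Rightarrow> (nat \<Rightarrow> nat \<Rightarrow> complex)" where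
  "ZK d n \<rho> = (\<lambda>e f. \<Sum>a\<in>bi_idx d. \<Sum>b\<in>bi_idx d.
      Kmat n e a * ptrans \<rho> a b * cnj (Kmat n f b))"

definition Mplus_x :: "nat \<Rightarrow> (nat \<Rightarrow> real) \<Rightarrow> (nat \<Rightarrow> nat \<Rightarrow> complex) set" where
  "Mplus_x n x = {X. psd_on {0..<n} X \<and>
     (\<exists>lam::real. \<forall>i<n. X i i = of_real (lam * x i))}"

definition rank1 :: "nat \<Rightarrow> (nat \<Rightarrow> nat \<Rightarrow> complex) \<Rightarrow> bool" where
  "rank1 n X \<longleftrightarrow> (\<exists>u v :: nat \<Rightarrow> complex. (\<exists>i<n. u i \<noteq> 0) \<and> (\<exists>j<n. v j \<noteq> 0) \<and>
     (\<forall>i<n. \<forall>j<n. X i j = u i * cnj (v j)))"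

text \<open>R_1[C]: convex cone generated by the rank-1 elements of C (finite
  nonnegative combinations; the empty combination gives 0).\<close>
definition R1 :: "nat \<Rightarrow> (nat \<Rightarrow> nat \<Rightarrow> complex) set \<Rightarrow> (nat \<Rightarrow> nat \<Rightarrow> complex) set" where
  "R1 n C = {X. \<exists>(m::nat) (c :: nat \<Rightarrow> real) (Y :: nat \<Rightarrow> nat \<Rightarrow> nat \<Rightarrow> complex).
     (\<forall>t<m. c t \<ge> 0 \<and> Y t \<in> C \<and> rank1 n (Y t)) \<and>
     (\<forall>i<n. \<forall>j<n. X i j = (\<Sum>t<m. of_real (c t) * Y t i j))}"

end

theory Submission imports Defs begin

text \<open>Write \<rho> = sum_t |v_t><v_t| (x) |w_t><w_t|. The block of \<rho> on the vectors |ii>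
  is then the Gram-type sum sum_t z_t z_t^* with z_t i = v_t i * w_t i, while
  K \<rho>^\<Gamma> K^* = sum_t u_t u_t^* with u_t i = v_t i * cnj (w_t i), so |u_t i| = |z_t i|.
  Since \<rho> is in F_\<phi>, the first sum equals lam \<phi> \<phi>^*, and a sum of positive
  rank-one matrices is rank one only if every summand is a multiple of it: each z_t is
  parallel to \<phi>. Hence the diagonal of u_t u_t^* is proportional to (|\<phi>_i|^2)_i, and
  K \<rho>^\<Gamma> K^* is a sum of rank-one elements of M_n^+[x].\<close>

lemma sum_mult_cnj_eq_0_iff:
  fixes a :: "'t \<Rightarrow> complex"
  assumes "finite T"
  shows "(\<Sum>t\<in>T. a t * cnj (a t)) = 0 \<longleftrightarrow> (\<forall>t\<in>T. a t = 0)"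
proof -
  have "(\<Sum>t\<in>T. a t * cnj (a t)) = of_real (\<Sum>t\<in>T. (cmod (a t))\<^sup>2)"
    by (simp only: of_real_sum complex_norm_square)
  then have "(\<Sum>t\<in>T. a t * cnj (a t)) = 0 \<longleftrightarrow> (\<Sum>t\<in>T. (cmod (a t))\<^sup>2) = 0"
    by (simp only: of_real_eq_0_iff)
  then show ?thesis
    using assms by (simp add: sum_nonneg_eq_0_iff)
qed

lemma psd_on_outer: "psd_on I (\<lambda>i j. u i * cnj (u j))"
  unfolding psd_on_def
proof (intro conjI ballI allI)
  fix v :: "_ \<Rightarrow> complex"
  define s where "s = (\<Sum>a\<in>I. cnj (v a) * u a)"
  have "(\<Sum>a\<in>I. \<Sum>b\<in>I. cnj (v a) * (u a * cnj (u b)) * v b) = s * cnj s"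
    unfolding s_def by (simp add: sum_product cnj_sum mult_ac)
  also have "\<dots> = of_real ((cmod s)\<^sup>2)"
    by (simp only: complex_norm_square)
  finally show "0 \<le> Re (\<Sum>a\<in>I. \<Sum>b\<in>I. cnj (v a) * (u a * cnj (u b)) * v b)"
    by simp
qed simp

lemma sum_outer_eq_outer_imp_parallel:
  fixes z :: "'t \<Rightarrow> 'i \<Rightarrow> complex" and \<phi> :: "'i \<Rightarrow> complex"
  assumes "finite T"
    and gram: "\<forall>i\<in>I. \<forall>k\<in>I. (\<Sum>t\<in>T. z t i * cnj (z t k)) = of_real lam * \<phi> i * cnj (\<phi> k)"
    and "i \<in> I" "k \<in> I" "t \<in> T"
  shows "z t i * \<phi> k = z t k * \<phi> i"
proof -
  define D where "D t = z t i * \<phi> k - z t k * \<phi> i" for t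
  have D_square: "D t * cnj (D t) =
      z t i * cnj (z t i) * (\<phi> k * cnj (\<phi> k)) - z t i * cnj (z t k) * (\<phi> k * cnj (\<phi> i))
      - z t k * cnj (z t i) * (\<phi> i * cnj (\<phi> k)) + z t k * cnj (z t k) * (\<phi> i * cnj (\<phi> i))" for t
    unfolding D_def by (simp add: algebra_simps)
  \<comment> \<open>summed over t, the Gram entries turn this into lam |phi_i phi_k|^2 (1 - 1 - 1 + 1)\<close>
  have "(\<Sum>t\<in>T. D t * cnj (D t)) =
      (\<Sum>t\<in>T. z t i * cnj (z t i)) * (\<phi> k * cnj (\<phi> k))
      - (\<Sum>t\<in>T. z t i * cnj (z t k)) * (\<phi> k * cnj (\<phi> i))
      - (\<Sum>t\<in>T. z t k * cnj (z t i)) * (\<phi> i * cnj (\<phi> k))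
      + (\<Sum>t\<in>T. z t k * cnj (z t k)) * (\<phi> i * cnj (\<phi> i))"
    unfolding D_square by (simp add: sum.distrib sum_subtractf sum_distrib_right)
  also have "\<dots> = 0"
    using gram \<open>i \<in> I\<close> \<open>k \<in> I\<close> by (simp add: algebra_simps)
  finally have "D t = 0"
    using \<open>finite T\<close> \<open>t \<in> T\<close> by (simp add: sum_mult_cnj_eq_0_iff)
  then show ?thesis
    unfolding D_def by simp
qed

lemma sum_outer_eq_outer_imp_norms_proportional:
  fixes z :: "'t \<Rightarrow> 'i \<Rightarrow> complex" and \<phi> :: "'i \<Rightarrow> complex"
  assumes "finite T"
    and gram: "\<forall>i\<in>I. \<forall>k\<in>I. (\<Sum>t\<in>T. z t i * cnj (z t k)) = of_real lam * \<phi> i * cnj (\<phi> k)"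
    and "t \<in> T"
  shows "\<exists>\<mu>::real. \<forall>i\<in>I. (cmod (z t i))\<^sup>2 = \<mu> * (cmod (\<phi> i))\<^sup>2"
proof (cases "\<exists>k\<in>I. \<phi> k \<noteq> 0")
  case True
  then obtain k where "k \<in> I" "\<phi> k \<noteq> 0"
    by blast
  have "(cmod (z t i))\<^sup>2 = (cmod (z t k))\<^sup>2 / (cmod (\<phi> k))\<^sup>2 * (cmod (\<phi> i))\<^sup>2" if "i \<in> I" for i
  proof -
    have "cmod (z t i) * cmod (\<phi> k) = cmod (z t k) * cmod (\<phi> i)"
      using sum_outer_eq_outer_imp_parallel[OF assms(1,2) that \<open>k \<in> I\<close> \<open>t \<in> T\<close>]
      by (metis norm_mult)
    then have "(cmod (z t i))\<^sup>2 * (cmod (\<phi> k))\<^sup>2 = (cmod (z t k))\<^sup>2 * (cmod (\<phi> i))\<^sup>2"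
      by (metis power_mult_distrib)
    then show ?thesis
      using \<open>\<phi> k \<noteq> 0\<close> by (simp add: field_simps)
  qed
  then show ?thesis
    by blast
next
  case False
  have "z t i = 0" if "i \<in> I" for i
  proof -
    have "(\<Sum>t\<in>T. z t i * cnj (z t i)) = 0"
      using gram False that by simp
    then show ?thesis
      using assms(1,3) by (simp add: sum_mult_cnj_eq_0_iff)
  qed
  then show ?thesis
    by (intro exI[of _ 0]) simp
qed

lemma outer_in_Mplus_x:
  assumes "\<forall>i<n. (cmod (u i))\<^sup>2 = \<mu> * x i"
  shows "(\<lambda>i j. u i * cnj (u j)) \<in> Mplus_x n x"
proof -
  have diag: "u i * cnj (u i) = of_real (\<mu> * x i)" if "i < n" for i
  proof -
    have "u i * cnj (u i) = of_real ((cmod (u i))\<^sup>2)"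
      by (simp only: complex_norm_square)
    then show ?thesis
      using assms that by simp
  qed
  then show ?thesis
    unfolding Mplus_x_def by (intro CollectI conjI psd_on_outer exI[of _ \<mu>] allI impI diag)
qed

text \<open>Zero terms are dropped by giving them coefficient 0 and replacing them
  by some nonzero term, which exists unless the whole sum vanishes.\<close>
lemma sum_outer_in_R1:
  fixes u :: "nat \<Rightarrow> nat \<Rightarrow> complex"
  assumes terms: "\<forall>t<m. (\<exists>i<n. u t i \<noteq> 0) \<longrightarrow> (\<lambda>i j. u t i * cnj (u t j)) \<in> C"
    and X: "\<forall>i<n. \<forall>j<n. X i j = (\<Sum>t<m. u t i * cnj (u t j))"
  shows "X \<in> R1 n C"
proof -
  define nz where "nz t \<longleftrightarrow> (\<exists>i<n. u t i \<noteq> 0)" for t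
  define uu where "uu t = (\<lambda>i j. u t i * cnj (u t j))" for t
  have good: "uu t \<in> C \<and> rank1 n (uu t)" if "t < m" "nz t" for t
  proof
    show "uu t \<in> C"
      using terms that unfolding uu_def nz_def by simp
    show "rank1 n (uu t)"
      using \<open>nz t\<close> unfolding rank1_def uu_def nz_def by blast
  qed
  show ?thesis
  proof (cases "\<exists>t0<m. nz t0")
    case True
    then obtain t0 where "t0 < m" "nz t0"
      by blast
    define c where "c t = (if nz t then 1 else 0 :: real)" for t
    define Y where "Y t = uu (if nz t then t else t0)" for t
    have "of_real (c t) * Y t i j = u t i * cnj (u t j)" if "i < n" "j < n" for t i j
      using that by (auto simp: c_def Y_def uu_def nz_def)
    then have "X i j = (\<Sum>t<m. of_real (c t) * Y t i j)" if "i < n" "j < n" for i j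
      using X that by simp
    moreover have "c t \<ge> 0 \<and> Y t \<in> C \<and> rank1 n (Y t)" if "t < m" for t
      using good that \<open>t0 < m\<close> \<open>nz t0\<close> by (simp add: c_def Y_def)
    ultimately have "(\<forall>t<m. c t \<ge> 0 \<and> Y t \<in> C \<and> rank1 n (Y t)) \<and>
        (\<forall>i<n. \<forall>j<n. X i j = (\<Sum>t<m. of_real (c t) * Y t i j))"
      by simp
    then show ?thesis
      unfolding R1_def by blast
  next
    case False
    then have "X i j = 0" if "i < n" "j < n" for i j
      using X that unfolding nz_def by simp
    then show ?thesis
      unfolding R1_def by (intro CollectI exI[of _ 0]) simp
  qed
qed

lemma mmult_projV_left:
  assumes "i < n" "n \<le> d"
  shows "mmult_on (bi_idx d) (projV n) X (i,i) b = X (i,i) b"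
proof -
  have "mmult_on (bi_idx d) (projV n) X (i,i) b = (\<Sum>c\<in>bi_idx d. if c = (i,i) then X c b else 0)"
    unfolding mmult_on_def by (rule sum.cong) (auto simp: projV_def assms split: if_splits)
  then show ?thesis
    using assms by (simp add: bi_idx_def)
qed

lemma mmult_projV_right:
  assumes "k < n" "n \<le> d"
  shows "mmult_on (bi_idx d) Y (projV n) a (k,k) = Y a (k,k)"
proof -
  have "mmult_on (bi_idx d) Y (projV n) a (k,k) = (\<Sum>c\<in>bi_idx d. if c = (k,k) then Y a c else 0)"
    unfolding mmult_on_def by (rule sum.cong) (auto simp: projV_def assms split: if_splits)
  then show ?thesis
    using assms by (simp add: bi_idx_def)
qed

lemma F_phi_diag_block:
  assumes "\<rho> \<in> F_phi d n \<phi>" "n \<le> d"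
  obtains lam :: real where "\<forall>i<n. \<forall>k<n. \<rho> (i,i) (k,k) = of_real lam * \<phi> i * cnj (\<phi> k)"
proof -
  obtain lam :: real where lam: "\<forall>a\<in>bi_idx d. \<forall>b\<in>bi_idx d.
      mmult_on (bi_idx d) (mmult_on (bi_idx d) (projV n) \<rho>) (projV n) a b
        = of_real lam * phi_vec n \<phi> a * cnj (phi_vec n \<phi> b)"
    using assms(1) unfolding F_phi_def by blast
  have "\<rho> (i,i) (k,k) = of_real lam * \<phi> i * cnj (\<phi> k)" if "i < n" "k < n" for i k
  proof -
    have "(i,i) \<in> bi_idx d" "(k,k) \<in> bi_idx d"
      using that assms(2) by (auto simp: bi_idx_def)
    then have "mmult_on (bi_idx d) (mmult_on (bi_idx d) (projV n) \<rho>) (projV n) (i,i) (k,k)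
        = of_real lam * phi_vec n \<phi> (i,i) * cnj (phi_vec n \<phi> (k,k))"
      using lam by blast
    then show ?thesis
      using that assms(2) by (simp add: phi_vec_def mmult_projV_left mmult_projV_right)
  qed
  then show ?thesis
    using that by blast
qed

lemma ZK_apply:
  assumes "e < n" "f < n" "n \<le> d"
  shows "ZK d n \<rho> e f = \<rho> (e,f) (f,e)"
proof -
  have Kmat_eq: "Kmat n g a = (if a = (g,g) then 1 else 0)" if "g < n" for g a
    using that by (cases a) (auto simp: Kmat_def)
  have indicator_mult: "(if P then 1 else 0) * x = (if P then x else 0)"
    and mult_cnj_indicator: "x * cnj (if P then 1 else 0) = (if P then x else 0)" for P and x :: complex
    by simp_all
  show ?thesis
    using assms by (simp add: ZK_def Kmat_eq indicator_mult mult_cnj_indicator bi_idx_def ptrans_def)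
qed

theorem mainTheorem9:
  fixes d n :: nat and \<phi> :: "nat \<Rightarrow> complex"
    and \<rho> :: "nat \<times> nat \<Rightarrow> nat \<times> nat \<Rightarrow> complex"
  assumes "n \<le> d"
    and "\<rho> \<in> F_phi d n \<phi>"
    and "separable d \<rho>"
  shows "ZK d n \<rho> \<in> R1 n (Mplus_x n (\<lambda>i. (cmod (\<phi> i))\<^sup>2))"
proof -
  obtain m :: nat and v w :: "nat \<Rightarrow> nat \<Rightarrow> complex" where \<rho>_sep: "\<forall>i<d. \<forall>j<d. \<forall>k<d. \<forall>l<d.
      \<rho> (i,j) (k,l) = (\<Sum>t<m. v t i * cnj (v t k) * w t j * cnj (w t l))"
    using assms(3) unfolding separable_def by blast
  obtain lam :: real where \<rho>_diag: "\<forall>i<n. \<forall>k<n. \<rho> (i,i) (k,k) = of_real lam * \<phi> i * cnj (\<phi> k)"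
    using F_phi_diag_block[OF assms(2,1)] .
  define z where "z t i = v t i * w t i" for t i
  define u where "u t i = v t i * cnj (w t i)" for t i
  have gram: "\<forall>i\<in>{..<n}. \<forall>k\<in>{..<n}. (\<Sum>t\<in>{..<m}. z t i * cnj (z t k)) = of_real lam * \<phi> i * cnj (\<phi> k)"
    using \<rho>_sep \<rho>_diag assms(1) by (simp add: z_def mult_ac)
  have ZK_sum: "\<forall>i<n. \<forall>j<n. ZK d n \<rho> i j = (\<Sum>t<m. u t i * cnj (u t j))"
    using \<rho>_sep assms(1) by (simp add: ZK_apply u_def mult_ac)
  have "(\<lambda>i j. u t i * cnj (u t j)) \<in> Mplus_x n (\<lambda>i. (cmod (\<phi> i))\<^sup>2)" if "t < m" for t
  proof -
    have "t \<in> {..<m}"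
      using that by simp
    then obtain \<mu> :: real where "\<forall>i\<in>{..<n}. (cmod (z t i))\<^sup>2 = \<mu> * (cmod (\<phi> i))\<^sup>2"
      using sum_outer_eq_outer_imp_norms_proportional[OF finite_lessThan gram] by blast
    moreover have "cmod (u t i) = cmod (z t i)" for i
      by (simp add: u_def z_def norm_mult)
    ultimately show ?thesis
      by (intro outer_in_Mplus_x[where \<mu> = \<mu>]) simp
  qed
  then show ?thesis
    using sum_outer_in_R1 ZK_sum by blast
qed

end
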